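(* Let $d\ge2$, let $u_1,\dots,u_\ell$ be an enumeration of the elementary matrices $I+E_{ij}$ ($i\ne j$) in $\operatorname{SL}_d(\mathbb{Z})$, extended cyclically by $u_m=u_{m\bmod \ell}$, and for $N\ge1$ let $\Gamma_N=\{u_1^{k_1}\cdots u_N^{k_N}:k_i\in\mathbb{Z}\}$, acting on $\mathfrak{sl}_d(\mathbb{Z})$ by conjugation. Then there exist constants $Q,N<\infty$ such that for every companion matrix $c_p\in\mathfrak{sl}_d(\mathbb{Z})$ (i.e. $p$ a monic integer polynomial of degree $d$ with vanishing $t^{d-1}$-coefficient), the set $\Gamma_Nc_p=\{\gamma c_p\gamma^{-1}:\gamma\in\Gamma_N\}$ is $Q$-coset fleeing in $\mathfrak{sl}_d(\mathbb{Z})$ and hyperplane-fleeing in $\mathfrak{sl}_d(\mathbb{R})$.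
   Context: $E_{ij}$ is the matrix unit with $1$ in position $(i,j)$. $\mathfrak{sl}_d(\mathbb{Z})$ is the additive group of integer $d\times d$ trace-zero matrices. Companion matrix: for $p(t)=a_0+a_1t+\dots+a_{d-1}t^{d-1}+t^d$, $c_p$ has $1$'s on the subdiagonal, last column $(-a_0,\dots,-a_{d-1})^T$, and zeros elsewhere. For an abelian group $\Lambda$, $S\subset\Lambda$ is $Q$-coset fleeing if for every subgroup $W\le\Lambda$ of index $>Q$, $S$ is not contained in a coset of $W$. A subset of a real vector space is hyperplane-fleeing if it is not contained in any proper affine subspace. *)

theory Defs
  imports "Jordan_Normal_Form.Matrix" "HOL-Computational_Algebra.Polynomial"
begin

(* All matrices are d x d, indices 0..d-1 (the paper's i,j shifted by one). *)

definition mtrace :: "'a::comm_ring_1 mat \<Rightarrow> 'a" where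
  "mtrace A = (\<Sum>i<dim_row A. A $$ (i, i))"

definition sl :: "nat \<Rightarrow> int mat set" where
  "sl d = {A \<in> carrier_mat d d. mtrace A = 0}"

definition sl_real :: "nat \<Rightarrow> real mat set" where
  "sl_real d = {A \<in> carrier_mat d d. mtrace A = 0}"

definition matunit :: "nat \<Rightarrow> nat \<Rightarrow> nat \<Rightarrow> int mat" where
  "matunit d i j = mat d d (\<lambda>(a, b). if a = i \<and> b = j then 1 else 0)"

definition elem_mat :: "nat \<Rightarrow> nat \<times> nat \<Rightarrow> int mat" where
  "elem_mat d ij = 1\<^sub>m d + matunit d (fst ij) (snd ij)"

text \<open>Inverse of a d x d matrix (meaningful for invertible ones).\<close>
definition minv :: "nat \<Rightarrow> int mat \<Rightarrow> int mat" where
  "minv d A = (SOME B. B \<in> carrier_mat d d \<and> A * B = 1\<^sub>m d \<and> B * A = 1\<^sub>m d)"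

definition zpow :: "nat \<Rightarrow> int mat \<Rightarrow> int \<Rightarrow> int mat" where
  "zpow d A k = (if 0 \<le> k then A ^\<^sub>m nat k else (minv d A) ^\<^sub>m nat (- k))"

definition u_seq :: "nat \<Rightarrow> (nat \<times> nat) list \<Rightarrow> nat \<Rightarrow> int mat" where
  "u_seq d es m = elem_mat d (es ! ((m - 1) mod length es))"

fun word_prod :: "nat \<Rightarrow> (nat \<times> nat) list \<Rightarrow> (nat \<Rightarrow> int) \<Rightarrow> nat \<Rightarrow> int mat" where
  "word_prod d es k 0 = 1\<^sub>m d"
| "word_prod d es k (Suc n) = word_prod d es k n * zpow d (u_seq d es (Suc n)) (k (Suc n))"

definition Gamma :: "nat \<Rightarrow> (nat \<times> nat) list \<Rightarrow> nat \<Rightarrow> int mat set" where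
  "Gamma d es N = {word_prod d es k N | k. True}"

definition orbit :: "nat \<Rightarrow> (nat \<times> nat) list \<Rightarrow> nat \<Rightarrow> int mat \<Rightarrow> int mat set" where
  "orbit d es N c = {g * c * minv d g | g. g \<in> Gamma d es N}"

definition companion :: "nat \<Rightarrow> int poly \<Rightarrow> int mat" where
  "companion d p = mat d d (\<lambda>(i, j). if i = j + 1 then 1
                                     else if j = d - 1 then - coeff p i else 0)"

definition sl_subgroup :: "nat \<Rightarrow> int mat set \<Rightarrow> bool" where
  "sl_subgroup d W \<longleftrightarrow> W \<subseteq> sl d \<and> 0\<^sub>m d d \<in> W \<and>
     (\<forall>x\<in>W. \<forall>y\<in>W. x + y \<in> W) \<and> (\<forall>x\<in>W. - x \<in> W)"

definition sl_cosets :: "nat \<Rightarrow> int mat set \<Rightarrow> int mat set set" where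
  "sl_cosets d W = {(\<lambda>w. a + w) ` W | a. a \<in> sl d}"

text \<open>"index of W > Q" (index possibly infinite).\<close>
definition index_gt :: "nat \<Rightarrow> int mat set \<Rightarrow> nat \<Rightarrow> bool" where
  "index_gt d W Q \<longleftrightarrow> \<not> (finite (sl_cosets d W) \<and> card (sl_cosets d W) \<le> Q)"

definition coset_fleeing :: "nat \<Rightarrow> nat \<Rightarrow> int mat set \<Rightarrow> bool" where
  "coset_fleeing d Q S \<longleftrightarrow>
     (\<forall>W. sl_subgroup d W \<and> index_gt d W Q \<longrightarrow> \<not> (\<exists>C\<in>sl_cosets d W. S \<subseteq> C))"

definition affine_sub :: "nat \<Rightarrow> real mat set \<Rightarrow> bool" where
  "affine_sub d A \<longleftrightarrow> A \<subseteq> sl_real d \<and>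
     (\<forall>x\<in>A. \<forall>y\<in>A. \<forall>t::real. (1 - t) \<cdot>\<^sub>m x + t \<cdot>\<^sub>m y \<in> A)"

definition hyperplane_fleeing :: "nat \<Rightarrow> real mat set \<Rightarrow> bool" where
  "hyperplane_fleeing d S \<longleftrightarrow>
     (\<forall>A. affine_sub d A \<and> A \<noteq> sl_real d \<longrightarrow> \<not> S \<subseteq> A)"

end

(*
  Write C_t for the conjugate of a matrix C by the transvection I + t E_ij.
  Then C_t - C = t (E_ij C - C E_ij) - t^2 C_ji E_ij, so
  (C_1 - C) + (C_{-1} - C) = -2 C_ji E_ij and (C_1 - C) - (C_{-1} - C) = 2 (E_ij C - C E_ij),
  whose diagonal part is 2 C_ji (E_ii - E_jj).  For every i \<noteq> j, at most three
  transvection conjugations turn a companion matrix into some C with C_ji = \<plusminus>1,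
  and \<Gamma>_{4l} realises every product of four transvections, one from each block of
  length l; hence C, C_1 and C_{-1} all lie in the orbit.  Consequently every
  subgroup of sl_d(Z) containing all differences of orbit elements contains
  2 E_ij and 2 (E_ii - E_jj), hence 2 sl_d(Z).  Cosets of such a subgroup are
  determined by residues mod 2, so its index is at most 2^(d^2); and the real
  span of the differences is all of sl_d(R), so the orbit lies in no proper
  affine subspace.
*)

theory Submission
  imports Defs
begin

abbreviation offdiag :: "nat \<Rightarrow> (nat \<times> nat) set" where
  "offdiag d \<equiv> {(i, j). i < d \<and> j < d \<and> i \<noteq> j}"

section \<open>Transvections\<close>

lemma matunit_carrier [simp]: "matunit d i j \<in> carrier_mat d d"
  by (simp add: matunit_def)

lemma matunit_dims [simp]: "dim_row (matunit d i j) = d" "dim_col (matunit d i j) = d"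
  by (simp_all add: matunit_def)

lemma index_matunit [simp]:
  "k < d \<Longrightarrow> l < d \<Longrightarrow> matunit d i j $$ (k, l) = (if k = i \<and> l = j then 1 else 0)"
  by (simp add: matunit_def)

definition transvection :: "nat \<Rightarrow> nat \<times> nat \<Rightarrow> int \<Rightarrow> int mat" where
  "transvection d ij t = 1\<^sub>m d + t \<cdot>\<^sub>m matunit d (fst ij) (snd ij)"

definition transvection_conj :: "nat \<Rightarrow> nat \<times> nat \<Rightarrow> int \<Rightarrow> int mat \<Rightarrow> int mat" where
  "transvection_conj d ij t M = transvection d ij t * M * transvection d ij (- t)"

lemma transvection_carrier [simp]: "transvection d ij t \<in> carrier_mat d d"
  by (simp add: transvection_def)

lemma transvection_dims [simp]: "dim_row (transvection d ij t) = d" "dim_col (transvection d ij t) = d"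
  by (simp_all add: transvection_def)

lemma index_transvection [simp]:
  "k < d \<Longrightarrow> l < d \<Longrightarrow> transvection d (i, j) t $$ (k, l) =
     (if k = l then 1 else 0) + (if k = i \<and> l = j then t else 0)"
  by (simp add: transvection_def)

lemma index_transvection_mult:
  assumes "M \<in> carrier_mat d n" "k < d" "l < n" "j < d"
  shows "(transvection d (i, j) t * M) $$ (k, l) = M $$ (k, l) + (if k = i then t * M $$ (j, l) else 0)"
proof -
  have "(transvection d (i, j) t * M) $$ (k, l) = (\<Sum>m<d. transvection d (i, j) t $$ (k, m) * M $$ (m, l))"
    using assms by (simp add: scalar_prod_def lessThan_atLeast0 row_def col_def)
  also have "\<dots> = (\<Sum>m<d. (if k = m then M $$ (m, l) else 0) + (if k = i \<and> m = j then t * M $$ (m, l) else 0))"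
    using assms by (intro sum.cong) (auto simp: ring_distribs)
  finally show ?thesis
    using assms by (simp add: sum.distrib)
qed

lemma index_mult_transvection:
  assumes "M \<in> carrier_mat n d" "k < n" "l < d" "i < d"
  shows "(M * transvection d (i, j) t) $$ (k, l) = M $$ (k, l) + (if l = j then t * M $$ (k, i) else 0)"
proof -
  have "(M * transvection d (i, j) t) $$ (k, l) = (\<Sum>m<d. M $$ (k, m) * transvection d (i, j) t $$ (m, l))"
    using assms by (simp add: scalar_prod_def lessThan_atLeast0 row_def col_def)
  also have "\<dots> = (\<Sum>m<d. (if m = l then M $$ (k, m) else 0) + (if m = i \<and> l = j then t * M $$ (k, m) else 0))"
    using assms by (intro sum.cong) (auto simp: ring_distribs)
  finally show ?thesis
    using assms by (simp add: sum.distrib)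
qed

lemma transvection_conj_dims [simp]:
  "dim_row (transvection_conj d ij t M) = d" "dim_col (transvection_conj d ij t M) = d"
  by (simp_all add: transvection_conj_def)

lemma transvection_conj_carrier [simp]:
  "M \<in> carrier_mat d d \<Longrightarrow> transvection_conj d ij t M \<in> carrier_mat d d"
  unfolding transvection_conj_def by (meson mult_carrier_mat transvection_carrier)

lemma index_transvection_conj:
  assumes "M \<in> carrier_mat d d" "k < d" "l < d" "i < d" "j < d"
  shows "transvection_conj d (i, j) t M $$ (k, l) = M $$ (k, l)
     + t * ((if k = i then M $$ (j, l) else 0) - (if l = j then M $$ (k, i) else 0))
     - t * t * (if k = i \<and> l = j then M $$ (j, i) else 0)"
proof -
  have "transvection d (i, j) t * M \<in> carrier_mat d d"
    using assms(1) by (meson mult_carrier_mat transvection_carrier)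
  then show ?thesis
    using assms index_transvection_mult[OF assms(1) _ _ assms(5)] unfolding transvection_conj_def
    by (subst index_mult_transvection[of _ d]) (auto simp del: index_mult_mat simp: algebra_simps)
qed

lemma transvection_conj_zero:
  "M \<in> carrier_mat d d \<Longrightarrow> i < d \<Longrightarrow> j < d \<Longrightarrow> transvection_conj d (i, j) 0 M = M"
  by (rule eq_matI) (auto simp: index_transvection_conj)

lemma transvection_zero: "transvection d ij 0 = 1\<^sub>m d"
  by (rule eq_matI) (auto simp: transvection_def)

lemma transvection_add:
  assumes "(i, j) \<in> offdiag d"
  shows "transvection d (i, j) s * transvection d (i, j) t = transvection d (i, j) (s + t)"
  by (rule eq_matI) (use assms in \<open>subst index_mult_transvection[of _ d], auto simp: algebra_simps\<close>)

lemma transvection_pow: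
  assumes "(i, j) \<in> offdiag d"
  shows "transvection d (i, j) t ^\<^sub>m n = transvection d (i, j) (t * int n)"
  by (induction n) (auto simp: transvection_zero transvection_add[OF assms] algebra_simps)

section \<open>The sets \<Gamma>_N and their orbits\<close>

definition mat_inverse :: "nat \<Rightarrow> 'a::semiring_1 mat \<Rightarrow> 'a mat \<Rightarrow> bool" where
  "mat_inverse d A B \<longleftrightarrow>
     A \<in> carrier_mat d d \<and> B \<in> carrier_mat d d \<and> A * B = 1\<^sub>m d \<and> B * A = 1\<^sub>m d"

lemma minv_eqI:
  assumes "mat_inverse d A B"
  shows "minv d A = B"
proof -
  have inv: "mat_inverse d A (minv d A)"
    using someI[of "\<lambda>B. B \<in> carrier_mat d d \<and> A * B = 1\<^sub>m d \<and> B * A = 1\<^sub>m d"] assms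
    by (auto simp: mat_inverse_def minv_def)
  then have "minv d A = minv d A * (A * B)"
    using inv assms by (auto simp: mat_inverse_def right_mult_one_mat)
  also have "\<dots> = (minv d A * A) * B"
    by (rule assoc_mult_mat[symmetric]) (use inv assms in \<open>auto simp: mat_inverse_def\<close>)
  also have "\<dots> = B"
    using inv assms by (auto simp: mat_inverse_def)
  finally show ?thesis .
qed

lemma mat_inverse_one: "mat_inverse d (1\<^sub>m d) (1\<^sub>m d)"
  by (simp add: mat_inverse_def)

lemma mat_inverse_mult:
  assumes "mat_inverse d A A'" "mat_inverse d B B'"
  shows "mat_inverse d (A * B) (B' * A')"
proof -
  have carr: "A \<in> carrier_mat d d" "A' \<in> carrier_mat d d" "B \<in> carrier_mat d d" "B' \<in> carrier_mat d d"
    using assms by (auto simp: mat_inverse_def)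
  have "A * B * (B' * A') = A * (B * B') * A'"
    using carr by (simp add: assoc_mult_mat[of _ d d _ d _ d])
  moreover have "B' * A' * (A * B) = B' * (A' * A) * B"
    using carr by (simp add: assoc_mult_mat[of _ d d _ d _ d])
  ultimately show ?thesis
    using assms carr by (auto simp: mat_inverse_def)
qed

lemma mat_inverse_transvection:
  "ij \<in> offdiag d \<Longrightarrow> mat_inverse d (transvection d ij t) (transvection d ij (- t))"
  by (cases ij) (simp add: mat_inverse_def transvection_add transvection_zero)

lemma zpow_elem_mat:
  assumes "ij \<in> offdiag d"
  shows "zpow d (elem_mat d ij) t = transvection d ij t"
proof -
  obtain i j where ij: "ij = (i, j)" by fastforce
  have elem: "elem_mat d ij = transvection d ij 1"
    by (rule eq_matI) (auto simp: elem_mat_def transvection_def)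
  have "minv d (transvection d ij 1) = transvection d ij (- 1)"
    using mat_inverse_transvection[OF assms] by (rule minv_eqI)
  then show ?thesis
    using assms unfolding zpow_def elem by (auto simp: ij transvection_pow)
qed

lemma assoc_mult_conj_mat:
  assumes "A \<in> carrier_mat d d" "B \<in> carrier_mat d d" "M \<in> carrier_mat d d"
    "B' \<in> carrier_mat d d" "A' \<in> carrier_mat d d"
  shows "A * (B * M * B') * A' = A * B * M * (B' * A')"
proof -
  have "A * (B * M * B') * A' = A * (B * M) * B' * A'"
    using assms by (simp add: assoc_mult_mat[of A d d _ d B' d])
  also have "\<dots> = A * B * M * B' * A'"
    using assms by (simp add: assoc_mult_mat[of A d d B d M d])
  also have "\<dots> = A * B * M * (B' * A')"
    using assms by (simp add: assoc_mult_mat[of _ d d B' d A' d])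
  finally show ?thesis .
qed

lemma word_prod_cong:
  "(\<And>m. m \<le> n \<Longrightarrow> k' m = k m) \<Longrightarrow> word_prod d es k' n = word_prod d es k n"
  by (induction n) auto

definition conj_word :: "nat \<Rightarrow> ((nat \<times> nat) \<times> int) list \<Rightarrow> int mat \<Rightarrow> int mat" where
  "conj_word d ws M = foldr (\<lambda>(ij, t). transvection_conj d ij t) ws M"

lemma conj_word_Cons:
  "conj_word d ((ij, t) # ws) M = transvection_conj d ij t (conj_word d ws M)"
  by (simp add: conj_word_def)

lemma conj_word_carrier [simp]: "M \<in> carrier_mat d d \<Longrightarrow> conj_word d ws M \<in> carrier_mat d d"
  by (induction ws) (auto simp: conj_word_def)

locale offdiag_enumeration =
  fixes d :: nat and es :: "(nat \<times> nat) list"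
  assumes set_es: "set es \<subseteq> offdiag d" and es_nonempty: "es \<noteq> []"
begin

lemma zpow_u_seq: "zpow d (u_seq d es m) t = transvection d (es ! ((m - 1) mod length es)) t"
proof -
  have "es ! ((m - 1) mod length es) \<in> set es"
    using es_nonempty by simp
  then show ?thesis
    using set_es unfolding u_seq_def by (intro zpow_elem_mat) auto
qed

lemma word_prod_inverse: "mat_inverse d (word_prod d es k n) (minv d (word_prod d es k n))"
proof -
  have "\<exists>h. mat_inverse d (word_prod d es k n) h"
  proof (induction n)
    case 0
    show ?case
      using mat_inverse_one by auto
  next
    case (Suc n)
    have "es ! (n mod length es) \<in> set es"
      using es_nonempty by simp
    then have "es ! (n mod length es) \<in> offdiag d"
      using set_es by (rule rev_subsetD)
    then have u: "mat_inverse d (zpow d (u_seq d es (Suc n)) (k (Suc n)))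
        (transvection d (es ! (n mod length es)) (- k (Suc n)))"
      by (simp add: zpow_u_seq mat_inverse_transvection)
    obtain h where "mat_inverse d (word_prod d es k n) h"
      using Suc by blast
    from mat_inverse_mult[OF this u] show ?case
      by (simp only: word_prod.simps) blast
  qed
  then obtain h where h: "mat_inverse d (word_prod d es k n) h" ..
  then show ?thesis
    using minv_eqI[OF h] by simp
qed

lemma word_prod_carrier [simp]: "word_prod d es k n \<in> carrier_mat d d"
  using word_prod_inverse by (simp add: mat_inverse_def)

lemma word_prod_zero_exponents:
  assumes "n \<le> n'" and zero: "\<And>m. n < m \<Longrightarrow> m \<le> n' \<Longrightarrow> k m = 0"
  shows "word_prod d es k n' = word_prod d es k n"
proof -
  have "word_prod d es k m = word_prod d es k n" if "n \<le> m" "m \<le> n'" for m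
    using that
  proof (induction m rule: dec_induct)
    case (step m)
    then have "k (Suc m) = 0"
      using zero by simp
    then show ?case
      using step by (simp add: zpow_u_seq transvection_zero right_mult_one_mat[OF word_prod_carrier])
  qed simp
  then show ?thesis
    using assms(1) by blast
qed

lemma Gamma_mult_transvection:
  assumes g: "g \<in> Gamma d es (q * length es)" and ij: "ij \<in> set es"
  shows "g * transvection d ij t \<in> Gamma d es (q * length es + length es)"
proof -
  let ?n = "q * length es"
  obtain k where k: "g = word_prod d es k ?n"
    using g by (auto simp: Gamma_def)
  obtain idx where idx: "idx < length es" "es ! idx = ij"
    using ij by (auto simp: in_set_conv_nth)
  define k' where "k' m = (if m \<le> ?n then k m else if m = Suc (?n + idx) then t else 0)" for m
  have "word_prod d es k' (?n + length es) = word_prod d es k' (Suc (?n + idx))"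
    using idx by (intro word_prod_zero_exponents) (auto simp: k'_def)
  also have "\<dots> = word_prod d es k' (?n + idx) * transvection d ij t"
    using idx by (simp add: zpow_u_seq k'_def)
  also have "word_prod d es k' (?n + idx) = word_prod d es k' ?n"
    by (intro word_prod_zero_exponents) (auto simp: k'_def)
  also have "word_prod d es k' ?n = g"
    unfolding k by (rule word_prod_cong) (simp add: k'_def)
  finally have "word_prod d es k' (?n + length es) = g * transvection d ij t" .
  then show ?thesis
    unfolding Gamma_def by (metis (mono_tags, lifting) mem_Collect_eq)
qed

lemma orbit_transvection_conj_subset:
  assumes c: "c \<in> carrier_mat d d" and ij: "ij \<in> set es"
  shows "orbit d es (q * length es) (transvection_conj d ij t c)
    \<subseteq> orbit d es (q * length es + length es) c"
proof
  fix x assume "x \<in> orbit d es (q * length es) (transvection_conj d ij t c)"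
  then obtain g where g: "g \<in> Gamma d es (q * length es)"
    and x: "x = g * transvection_conj d ij t c * minv d g"
    by (auto simp: orbit_def)
  let ?T = "transvection d ij t" and ?T' = "transvection d ij (- t)"
  have inv_g: "mat_inverse d g (minv d g)"
    using g word_prod_inverse by (auto simp: Gamma_def)
  have "mat_inverse d (g * ?T) (?T' * minv d g)"
    using ij set_es by (intro mat_inverse_mult inv_g mat_inverse_transvection) auto
  then have minv: "minv d (g * ?T) = ?T' * minv d g"
    by (rule minv_eqI)
  have "x = g * ?T * c * (?T' * minv d g)"
    using inv_g c unfolding x transvection_conj_def mat_inverse_def
    by (intro assoc_mult_conj_mat) auto
  then show "x \<in> orbit d es (q * length es + length es) c"
    using Gamma_mult_transvection[OF g ij] unfolding orbit_def minv[symmetric] by blast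
qed

lemma self_mem_orbit:
  assumes "c \<in> carrier_mat d d"
  shows "c \<in> orbit d es n c"
proof -
  have one: "word_prod d es (\<lambda>_. 0) n = 1\<^sub>m d"
    using word_prod_zero_exponents[of 0 n "\<lambda>_. 0"] by simp
  then have "c = word_prod d es (\<lambda>_. 0) n * c * minv d (word_prod d es (\<lambda>_. 0) n)"
    using assms minv_eqI[OF mat_inverse_one] by simp
  then show ?thesis
    unfolding orbit_def Gamma_def by auto
qed

lemma conj_word_in_orbit:
  assumes "c \<in> carrier_mat d d" and "fst ` set ws \<subseteq> set es"
  shows "conj_word d ws c \<in> orbit d es (length ws * length es) c"
  using assms
proof (induction ws arbitrary: c rule: rev_induct)
  case Nil
  then show ?case
    using self_mem_orbit by (simp add: conj_word_def)
next
  case (snoc w ws)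
  obtain ij t where w: "w = (ij, t)" by fastforce
  have "conj_word d (ws @ [w]) c = conj_word d ws (transvection_conj d ij t c)"
    by (simp add: conj_word_def w)
  also have "\<dots> \<in> orbit d es (length ws * length es) (transvection_conj d ij t c)"
    using snoc by simp
  also have "\<dots> \<subseteq> orbit d es (length (ws @ [w]) * length es) c"
    using orbit_transvection_conj_subset[of c ij "length ws" t] snoc.prems w by (simp add: add.commute)
  finally show ?case .
qed

end

section \<open>Conjugates of companion matrices\<close>

lemma companion_carrier [simp]: "companion d p \<in> carrier_mat d d"
  by (simp add: companion_def)

lemma index_companion [simp]:
  "k < d \<Longrightarrow> l < d \<Longrightarrow> companion d p $$ (k, l) =
     (if k = l + 1 then 1 else if l = d - 1 then - coeff p k else 0)"
  by (simp add: companion_def)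

lemma companion_conj_word_unit_entry:
  assumes d: "d \<ge> 2" and ij: "(i, j) \<in> offdiag d"
  shows "\<exists>ws. length ws = 3 \<and> fst ` set ws \<subseteq> offdiag d
    \<and> \<bar>conj_word d ws (companion d p) $$ (j, i)\<bar> = 1"
proof -
  let ?c = "companion d p"
  let ?pad = "((0, 1), 0) :: (nat \<times> nat) \<times> int"
  have pad: "fst ?pad \<in> offdiag d"
    using d by simp
  consider "i < d - 1" "j = i + 1" | "i < d - 1" "j \<noteq> i + 1" | "i = d - 1" "j \<ge> 1"
    | "i = d - 1" "j = 0" "d = 2" | "i = d - 1" "j = 0" "d \<ge> 3"
    using ij d by fastforce
  then show ?thesis
  proof cases
    case 1
    then have "conj_word d [?pad, ?pad, ?pad] ?c $$ (j, i) = 1"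
      using ij d by (simp add: conj_word_def transvection_conj_zero)
    then show ?thesis
      using pad by (intro exI[of _ "[?pad, ?pad, ?pad]"]) simp
  next
    case 2
    let ?ws = "[((j, i + 1), 1), ?pad, ?pad]"
    have "conj_word d ?ws ?c $$ (j, i) = 1"
      using 2 ij d by (simp add: conj_word_def transvection_conj_zero index_transvection_conj)
    then show ?thesis
      using 2 ij pad by (intro exI[of _ ?ws]) auto
  next
    case 3
    let ?ws = "[((j - 1, d - 1), - 1), ((d - 1, j - 1), 1), ?pad]"
    have "j - 1 < d" "d - 1 < d" "j - 1 \<noteq> d - 1"
      using 3 ij by auto
    then have "conj_word d ?ws ?c $$ (j, i) = 1"
      using 3 d by (simp add: conj_word_def transvection_conj_zero index_transvection_conj)
    then show ?thesis
      using 3 ij pad by (intro exI[of _ ?ws]) auto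
  next
    case 4
    let ?ws = "[((0, 1), 1), ((1, 0), - 1), ?pad]"
    have "\<bar>conj_word d ?ws ?c $$ (j, i)\<bar> = 1"
      using 4 by (simp add: conj_word_def transvection_conj_zero index_transvection_conj)
    then show ?thesis
      using 4 by (intro exI[of _ ?ws]) auto
  next
    case 5
    let ?ws = "[((0, 1), 1), ((0, d - 1), 1), ((d - 1, 0), - 1)]"
    have "Suc 0 \<noteq> d - Suc 0"
      using 5 by auto
    then have "\<bar>conj_word d ?ws ?c $$ (j, i)\<bar> = 1"
      using 5 by (simp add: conj_word_def index_transvection_conj)
    then show ?thesis
      using 5 by (intro exI[of _ ?ws]) auto
  qed
qed

section \<open>Additive subgroups of matrices\<close>

definition mat_subgroup :: "nat \<Rightarrow> 'a::ab_group_add mat set \<Rightarrow> bool" where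
  "mat_subgroup d W \<longleftrightarrow> W \<subseteq> carrier_mat d d \<and> 0\<^sub>m d d \<in> W \<and>
     (\<forall>x\<in>W. \<forall>y\<in>W. x + y \<in> W) \<and> (\<forall>x\<in>W. - x \<in> W)"

context
  fixes d :: nat and W :: "'a::ab_group_add mat set"
  assumes W: "mat_subgroup d W"
begin

lemma mat_subgroup_carrier: "x \<in> W \<Longrightarrow> x \<in> carrier_mat d d"
  using W by (auto simp: mat_subgroup_def)

lemma mat_subgroup_zero: "0\<^sub>m d d \<in> W"
  using W by (simp add: mat_subgroup_def)

lemma mat_subgroup_add: "x \<in> W \<Longrightarrow> y \<in> W \<Longrightarrow> x + y \<in> W"
  using W by (simp add: mat_subgroup_def)

lemma mat_subgroup_uminus: "x \<in> W \<Longrightarrow> - x \<in> W"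
  using W by (simp add: mat_subgroup_def)

lemma mat_subgroup_diff: "x \<in> W \<Longrightarrow> y \<in> W \<Longrightarrow> x - y \<in> W"
  using mat_subgroup_add[OF _ mat_subgroup_uminus] mat_subgroup_carrier
  by (metis minus_add_uminus_mat)

end

lemma mat_subgroup_smult_int:
  fixes W :: "int mat set"
  assumes W: "mat_subgroup d W" and x: "x \<in> W"
  shows "a \<cdot>\<^sub>m x \<in> W"
proof -
  have x_carrier: "x \<in> carrier_mat d d"
    using mat_subgroup_carrier[OF W x] .
  have nat: "int n \<cdot>\<^sub>m x \<in> W" for n
  proof (induction n)
    case 0
    have "int 0 \<cdot>\<^sub>m x = 0\<^sub>m d d"
      using x_carrier by (intro eq_matI) auto
    then show ?case
      using mat_subgroup_zero[OF W] by simp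
  next
    case (Suc n)
    have "int (Suc n) \<cdot>\<^sub>m x = x + int n \<cdot>\<^sub>m x"
      using x_carrier by (intro eq_matI) (auto simp: algebra_simps)
    then show ?case
      using mat_subgroup_add[OF W x Suc] by simp
  qed
  show ?thesis
  proof (cases "a \<ge> 0")
    case True
    then show ?thesis
      using nat[of "nat a"] by simp
  next
    case False
    have "a \<cdot>\<^sub>m x = - ((- a) \<cdot>\<^sub>m x)"
      using x_carrier by (intro eq_matI) auto
    moreover have "(- a) \<cdot>\<^sub>m x \<in> W"
      using nat[of "nat (- a)"] False by simp
    ultimately show ?thesis
      using mat_subgroup_uminus[OF W] by simp
  qed
qed

lemma mat_subgroup_smult_preimage:
  fixes W :: "'a::comm_ring_1 mat set"
  assumes W: "mat_subgroup d W"
  shows "mat_subgroup d {X \<in> carrier_mat d d. c \<cdot>\<^sub>m X \<in> W}"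
proof -
  have "c \<cdot>\<^sub>m (x + y) = c \<cdot>\<^sub>m x + c \<cdot>\<^sub>m y" "c \<cdot>\<^sub>m (- x) = - (c \<cdot>\<^sub>m x)"
    if "x \<in> carrier_mat d d" "y \<in> carrier_mat d d" for x y
    using that by (auto intro!: eq_matI simp: algebra_simps)
  then show ?thesis
    using W mat_subgroup_add[OF W] mat_subgroup_uminus[OF W] mat_subgroup_zero[OF W]
    by (auto simp: mat_subgroup_def)
qed

lemma sl_subgroup_imp_mat_subgroup: "sl_subgroup d W \<Longrightarrow> mat_subgroup d W"
  by (auto simp: sl_subgroup_def mat_subgroup_def sl_def)

text \<open>For (k, l) \<noteq> (d - 1, d - 1) these matrices form a \<int>-basis of sl_d(\<int>).\<close>
definition sl_basis :: "nat \<Rightarrow> nat \<Rightarrow> nat \<Rightarrow> 'a::comm_ring_1 mat" where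
  "sl_basis d k l = mat d d (\<lambda>(a, b). if (a, b) = (k, l) then 1
     else if k = l \<and> (a, b) = (d - 1, d - 1) then - 1 else 0)"

lemma sl_basis_carrier [simp]: "sl_basis d k l \<in> carrier_mat d d"
  by (simp add: sl_basis_def)

lemma sl_basis_dims [simp]: "dim_row (sl_basis d k l) = d" "dim_col (sl_basis d k l) = d"
  by (simp_all add: sl_basis_def)

lemma index_sl_basis [simp]:
  "a < d \<Longrightarrow> b < d \<Longrightarrow> sl_basis d k l $$ (a, b) =
     (if (a, b) = (k, l) then 1 else if k = l \<and> (a, b) = (d - 1, d - 1) then - 1 else 0)"
  by (simp add: sl_basis_def)

lemma mtrace_sl_basis:
  assumes "k < d" "l < d" "(k, l) \<noteq> (d - 1, d - 1)"
  shows "mtrace (sl_basis d k l :: 'a::comm_ring_1 mat) = 0"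
proof (cases "k = l")
  case True
  have "mtrace (sl_basis d k l :: 'a mat)
      = (\<Sum>i<d. (if i = k then 1 else 0) - (if i = d - 1 then 1 else 0))"
    unfolding mtrace_def using assms True by (intro sum.cong) auto
  then show ?thesis
    using assms by (simp add: sum_subtractf)
next
  case False
  then show ?thesis
    unfolding mtrace_def by (intro sum.neutral) auto
qed

lemma smult_zero_sl_basis [simp]: "0 \<cdot>\<^sub>m sl_basis d k l = 0\<^sub>m d d"
  by (rule eq_matI) (simp_all del: index_sl_basis)

lemma mtrace_eq_last_diagonal_entry:
  assumes "X \<in> carrier_mat d d" "d \<ge> 1" "\<And>i. i < d - 1 \<Longrightarrow> X $$ (i, i) = 0"
  shows "mtrace X = X $$ (d - 1, d - 1)"
proof -
  have "mtrace X = X $$ (d - 1, d - 1) + (\<Sum>i\<in>{..<d} - {d - 1}. X $$ (i, i))"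
    unfolding mtrace_def using assms by (subst sum.remove[of _ "d - 1"]) auto
  also have "(\<Sum>i\<in>{..<d} - {d - 1}. X $$ (i, i)) = 0"
  proof (intro sum.neutral ballI)
    fix i assume "i \<in> {..<d} - {d - 1}"
    then have "i < d - 1"
      by auto
    then show "X $$ (i, i) = 0"
      using assms(3) by simp
  qed
  finally show ?thesis by simp
qed

lemma mtrace_minus:
  "A \<in> carrier_mat d d \<Longrightarrow> B \<in> carrier_mat d d \<Longrightarrow> mtrace (A - B) = mtrace A - mtrace B"
  by (simp add: mtrace_def sum_subtractf)

lemma mtrace_smult: "A \<in> carrier_mat d d \<Longrightarrow> mtrace (c \<cdot>\<^sub>m A) = c * mtrace A"
  by (simp add: mtrace_def sum_distrib_left)

lemma eq_zero_if_mtrace_zero: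
  assumes "Y \<in> carrier_mat d d" "mtrace Y = 0"
    and "\<And>k l. k < d \<Longrightarrow> l < d \<Longrightarrow> (k, l) \<noteq> (d - 1, d - 1) \<Longrightarrow> Y $$ (k, l) = 0"
  shows "Y = 0\<^sub>m d d"
proof (rule eq_matI)
  fix a b assume ab: "a < dim_row (0\<^sub>m d d :: 'a mat)" "b < dim_col (0\<^sub>m d d :: 'a mat)"
  have "mtrace Y = Y $$ (d - 1, d - 1)"
    using assms ab by (intro mtrace_eq_last_diagonal_entry) auto
  then show "Y $$ (a, b) = 0\<^sub>m d d $$ (a, b)"
    using assms ab by (cases "(a, b) = (d - 1, d - 1)") auto
qed (use assms in auto)

lemma mat_subgroup_mem_of_sl_coordinates:
  fixes W :: "'a::comm_ring_1 mat set"
  assumes W: "mat_subgroup d W" and X: "X \<in> carrier_mat d d" "mtrace X = 0"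
    and coords: "\<And>k l. k < d \<Longrightarrow> l < d \<Longrightarrow> (k, l) \<noteq> (d - 1, d - 1) \<Longrightarrow>
      X $$ (k, l) \<cdot>\<^sub>m sl_basis d k l \<in> W"
  shows "X \<in> W"
proof -
  let ?P = "{..<d} \<times> {..<d} - {(d - 1, d - 1)}"
  have "Y \<in> W"
    if "finite F" "Y \<in> carrier_mat d d" "mtrace Y = 0"
      "\<forall>(k, l) \<in> ?P. Y $$ (k, l) \<cdot>\<^sub>m sl_basis d k l \<in> W" "\<forall>(k, l) \<in> ?P - F. Y $$ (k, l) = 0"
    for F Y
    using that
  proof (induction F arbitrary: Y rule: finite_induct)
    case empty
    then have "Y = 0\<^sub>m d d"
      by (intro eq_zero_if_mtrace_zero) auto
    then show ?case
      using mat_subgroup_zero[OF W] by simp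
  next
    case (insert kl F)
    obtain k l where kl: "kl = (k, l)" by fastforce
    show ?case
    proof (cases "kl \<in> ?P")
      case False
      then show ?thesis
        using insert by auto
    next
      case True
      let ?B = "Y $$ (k, l) \<cdot>\<^sub>m sl_basis d k l"
      let ?Y' = "Y - ?B"
      have Y'_carrier: "?Y' \<in> carrier_mat d d"
        by (simp add: minus_carrier_mat)
      have Y'_index: "?Y' $$ (a, b) = (if (a, b) = (k, l) then 0 else Y $$ (a, b))"
        if "(a, b) \<in> ?P" for a b
        using that insert.prems True kl by auto
      have "mtrace (sl_basis d k l :: 'a mat) = 0"
        using True kl by (intro mtrace_sl_basis) auto
      then have "mtrace ?Y' = 0"
        using insert.prems by (simp add: mtrace_minus mtrace_smult[OF sl_basis_carrier] del: index_sl_basis)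
      moreover have "?Y' $$ (a, b) \<cdot>\<^sub>m sl_basis d a b \<in> W" if ab: "(a, b) \<in> ?P" for a b
        using Y'_index[OF ab] ab insert.prems(3) mat_subgroup_zero[OF W]
        by (cases "(a, b) = (k, l)") auto
      moreover have "?Y' $$ (a, b) = 0" if ab: "(a, b) \<in> ?P - F" for a b
        using Y'_index[of a b] ab insert.prems(4) kl by auto
      ultimately have "?Y' \<in> W"
        using insert.IH[OF Y'_carrier] by blast
      moreover have "?B \<in> W"
        using insert.prems(3) True kl by auto
      moreover have "Y = ?Y' + ?B"
        using insert.prems by (intro eq_matI) auto
      ultimately show ?thesis
        using mat_subgroup_add[OF W] by metis
    qed
  qed
  from this[of ?P X] show ?thesis
    using X coords by blast
qed

section \<open>Differences of the orbit\<close>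

lemma transvection_conj_add_neg:
  assumes "C \<in> carrier_mat d d" "(i, j) \<in> offdiag d"
  shows "(transvection_conj d (i, j) 1 C - C) + (transvection_conj d (i, j) (- 1) C - C)
    = (- 2 * C $$ (j, i)) \<cdot>\<^sub>m sl_basis d i j"
  by (rule eq_matI) (use assms in \<open>auto simp: index_transvection_conj\<close>)

lemma transvection_conj_diff_neg:
  assumes "C \<in> carrier_mat d d" "i < d - 1"
  shows "\<exists>Z \<in> carrier_mat d d. (\<forall>k < d. Z $$ (k, k) = 0) \<and>
    (transvection_conj d (i, d - 1) 1 C - C) - (transvection_conj d (i, d - 1) (- 1) C - C)
      = 2 \<cdot>\<^sub>m (C $$ (d - 1, i) \<cdot>\<^sub>m sl_basis d i i + Z)"
proof -
  let ?Z = "mat d d (\<lambda>(k, l). if k = l then 0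
    else (if k = i then C $$ (d - 1, l) else 0) - (if l = d - 1 then C $$ (k, i) else 0))"
  have "(transvection_conj d (i, d - 1) 1 C - C) - (transvection_conj d (i, d - 1) (- 1) C - C)
      = 2 \<cdot>\<^sub>m (C $$ (d - 1, i) \<cdot>\<^sub>m sl_basis d i i + ?Z)"
    by (rule eq_matI) (use assms in \<open>auto simp: index_transvection_conj\<close>)
  moreover have "?Z \<in> carrier_mat d d" "\<forall>k < d. ?Z $$ (k, k) = 0"
    by auto
  ultimately show ?thesis
    by blast
qed

lemma smult_smult_mat: "a \<cdot>\<^sub>m (b \<cdot>\<^sub>m A) = (a * b) \<cdot>\<^sub>m (A :: 'a::semigroup_mult mat)"
  by (rule eq_matI) (auto simp: mult.assoc)

definition differences_span_double_sl :: "nat \<Rightarrow> int mat set \<Rightarrow> bool" where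
  "differences_span_double_sl d S \<longleftrightarrow> (\<forall>W. mat_subgroup d W \<and> (\<forall>s\<in>S. \<forall>s'\<in>S. s - s' \<in> W)
     \<longrightarrow> (\<forall>X\<in>sl d. 2 \<cdot>\<^sub>m X \<in> W))"

lemma unit_mult_self: "\<bar>c\<bar> = 1 \<Longrightarrow> c * c = (1 :: int)"
  using abs_mult_self[of c] by simp

lemma double_offdiag_coordinate_mem:
  assumes W: "mat_subgroup d W" and ij: "(i, j) \<in> offdiag d"
    and C: "C \<in> carrier_mat d d" "\<bar>C $$ (j, i)\<bar> = 1"
    and conj: "\<And>t. transvection_conj d (i, j) t C - C \<in> W"
  shows "2 \<cdot>\<^sub>m (a \<cdot>\<^sub>m sl_basis d i j) \<in> W"
proof -
  have "(- 2 * C $$ (j, i)) \<cdot>\<^sub>m sl_basis d i j \<in> W"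
    using transvection_conj_add_neg[OF C(1) ij] mat_subgroup_add[OF W conj[of 1] conj[of "- 1"]]
    by simp
  then have "(- a * C $$ (j, i)) \<cdot>\<^sub>m ((- 2 * C $$ (j, i)) \<cdot>\<^sub>m sl_basis d i j) \<in> W"
    by (rule mat_subgroup_smult_int[OF W])
  then show ?thesis
    using unit_mult_self[OF C(2)] by (simp add: smult_smult_mat algebra_simps)
qed

lemma double_diagonal_coordinate_mem:
  assumes W: "mat_subgroup d W" and i: "i < d - 1"
    and C: "C \<in> carrier_mat d d" "\<bar>C $$ (d - 1, i)\<bar> = 1"
    and conj: "\<And>t. transvection_conj d (i, d - 1) t C - C \<in> W"
    and offdiag: "\<And>k l a. (k, l) \<in> offdiag d \<Longrightarrow> 2 \<cdot>\<^sub>m (a \<cdot>\<^sub>m sl_basis d k l) \<in> W"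
  shows "2 \<cdot>\<^sub>m (a \<cdot>\<^sub>m sl_basis d i i) \<in> W"
proof -
  let ?W2 = "{X \<in> carrier_mat d d. 2 \<cdot>\<^sub>m X \<in> W}"
  have W2: "mat_subgroup d ?W2"
    by (rule mat_subgroup_smult_preimage[OF W])
  obtain Z where Z: "Z \<in> carrier_mat d d" "\<forall>k < d. Z $$ (k, k) = 0"
    and eq: "(transvection_conj d (i, d - 1) 1 C - C) - (transvection_conj d (i, d - 1) (- 1) C - C)
      = 2 \<cdot>\<^sub>m (C $$ (d - 1, i) \<cdot>\<^sub>m sl_basis d i i + Z)"
    using transvection_conj_diff_neg[OF C(1) i] by blast
  have "2 \<cdot>\<^sub>m (C $$ (d - 1, i) \<cdot>\<^sub>m sl_basis d i i + Z) \<in> W"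
    using mat_subgroup_diff[OF W conj[of 1] conj[of "- 1"]] unfolding eq .
  then have sum: "C $$ (d - 1, i) \<cdot>\<^sub>m sl_basis d i i + Z \<in> ?W2"
    using Z(1) by simp
  have "Z \<in> ?W2"
  proof (rule mat_subgroup_mem_of_sl_coordinates[OF W2 Z(1)])
    show "mtrace Z = 0"
      using Z by (simp add: mtrace_def)
    fix k l assume "k < d" "l < d" "(k, l) \<noteq> (d - 1, d - 1)"
    then show "Z $$ (k, l) \<cdot>\<^sub>m sl_basis d k l \<in> ?W2"
      using Z(2) offdiag mat_subgroup_zero[OF W2] by (cases "k = l") auto
  qed
  with sum have "(C $$ (d - 1, i) \<cdot>\<^sub>m sl_basis d i i + Z) - Z \<in> ?W2"
    by (rule mat_subgroup_diff[OF W2])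
  moreover have "(C $$ (d - 1, i) \<cdot>\<^sub>m sl_basis d i i + Z) - Z = C $$ (d - 1, i) \<cdot>\<^sub>m sl_basis d i i"
    using Z(1) by (intro eq_matI) auto
  ultimately have "C $$ (d - 1, i) \<cdot>\<^sub>m sl_basis d i i \<in> ?W2"
    by simp
  then have "(a * C $$ (d - 1, i)) \<cdot>\<^sub>m (C $$ (d - 1, i) \<cdot>\<^sub>m sl_basis d i i) \<in> ?W2"
    by (rule mat_subgroup_smult_int[OF W2])
  then show ?thesis
    using unit_mult_self[OF C(2)] by (simp add: smult_smult_mat mult.assoc)
qed

lemma companion_orbit_unit_conjugates:
  assumes d: "d \<ge> 2" and es: "set es = offdiag d" and ij: "(i, j) \<in> offdiag d"
  shows "\<exists>C \<in> carrier_mat d d. \<bar>C $$ (j, i)\<bar> = 1 \<and>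
    (\<forall>t. transvection_conj d (i, j) t C \<in> orbit d es (4 * length es) (companion d p))"
proof -
  let ?c = "companion d p"
  have "(0, 1) \<in> set es"
    using es d by auto
  then have "es \<noteq> []"
    by auto
  then interpret offdiag_enumeration d es
    by unfold_locales (simp_all add: es)
  obtain ws where ws: "length ws = 3" "fst ` set ws \<subseteq> offdiag d"
    "\<bar>conj_word d ws ?c $$ (j, i)\<bar> = 1"
    using companion_conj_word_unit_entry[OF d ij] by blast
  have "transvection_conj d (i, j) t (conj_word d ws ?c) \<in> orbit d es (4 * length es) ?c" for t
  proof -
    have "fst ` set (((i, j), t) # ws) \<subseteq> set es"
      using ws(2) ij es by auto
    from conj_word_in_orbit[OF companion_carrier this]
    show ?thesis
      using ws(1) by (simp add: conj_word_Cons)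
  qed
  then show ?thesis
    using ws(3) by (intro bexI[of _ "conj_word d ws ?c"]) auto
qed

lemma companion_orbit_differences_span:
  assumes d: "d \<ge> 2" and es: "set es = offdiag d"
  shows "differences_span_double_sl d (orbit d es (4 * length es) (companion d p))"
  unfolding differences_span_double_sl_def
proof (intro allI impI ballI)
  let ?S = "orbit d es (4 * length es) (companion d p)"
  fix W X
  assume "mat_subgroup d W \<and> (\<forall>s\<in>?S. \<forall>s'\<in>?S. s - s' \<in> W)" and X: "X \<in> sl d"
  then have W: "mat_subgroup d W" and diff: "\<And>s s'. s \<in> ?S \<Longrightarrow> s' \<in> ?S \<Longrightarrow> s - s' \<in> W"
    by auto
  have witness: "\<exists>C \<in> carrier_mat d d. \<bar>C $$ (j, i)\<bar> = 1 \<and>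
      (\<forall>t. transvection_conj d (i, j) t C - C \<in> W)" if ij: "(i, j) \<in> offdiag d" for i j
  proof -
    obtain C where C: "C \<in> carrier_mat d d" "\<bar>C $$ (j, i)\<bar> = 1"
      and conj: "\<And>t. transvection_conj d (i, j) t C \<in> ?S"
      using companion_orbit_unit_conjugates[OF d es ij] by blast
    have "C \<in> ?S"
      using conj[of 0] ij C(1) by (simp add: transvection_conj_zero)
    then show ?thesis
      using C conj diff by blast
  qed
  have offdiag: "2 \<cdot>\<^sub>m (a \<cdot>\<^sub>m sl_basis d k l) \<in> W" if "(k, l) \<in> offdiag d" for k l a
    using witness[OF that] double_offdiag_coordinate_mem[OF W that] by blast
  have diagonal: "2 \<cdot>\<^sub>m (a \<cdot>\<^sub>m sl_basis d i i) \<in> W" if i: "i < d - 1" for i a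
  proof -
    have "(i, d - 1) \<in> offdiag d"
      using i by auto
    then show ?thesis
      using witness double_diagonal_coordinate_mem[OF W i _ _ _ offdiag] by blast
  qed
  have "X \<in> {X \<in> carrier_mat d d. 2 \<cdot>\<^sub>m X \<in> W}"
  proof (rule mat_subgroup_mem_of_sl_coordinates[OF mat_subgroup_smult_preimage[OF W]])
    show "X \<in> carrier_mat d d" "mtrace X = 0"
      using X by (auto simp: sl_def)
    fix k l assume "k < d" "l < d" "(k, l) \<noteq> (d - 1, d - 1)"
    then show "X $$ (k, l) \<cdot>\<^sub>m sl_basis d k l \<in> {X \<in> carrier_mat d d. 2 \<cdot>\<^sub>m X \<in> W}"
      using offdiag diagonal by (cases "k = l") auto
  qed
  then show "2 \<cdot>\<^sub>m X \<in> W"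
    by simp
qed

section \<open>Coset fleeing\<close>

lemma card_mat_entries_le:
  assumes "finite K"
  shows "finite {M \<in> carrier_mat n m. \<forall>i<n. \<forall>j<m. M $$ (i, j) \<in> K}
    \<and> card {M \<in> carrier_mat n m. \<forall>i<n. \<forall>j<m. M $$ (i, j) \<in> K} \<le> card K ^ (n * m)"
proof -
  let ?T = "{M \<in> carrier_mat n m. \<forall>i<n. \<forall>j<m. M $$ (i, j) \<in> K}"
  let ?I = "{..<n} \<times> {..<m}"
  let ?f = "\<lambda>M. restrict (\<lambda>(i, j). M $$ (i, j)) ?I"
  have inj: "inj_on ?f ?T"
  proof (rule inj_onI)
    fix M M' assume M: "M \<in> ?T" "M' \<in> ?T" "?f M = ?f M'"
    show "M = M'"
    proof (rule eq_matI)
      fix i j assume ij: "i < dim_row M'" "j < dim_col M'"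
      have "?f M (i, j) = ?f M' (i, j)"
        using M(3) by simp
      then show "M $$ (i, j) = M' $$ (i, j)"
        using ij M(2) by auto
    qed (use M in auto)
  qed
  have image: "?f ` ?T \<subseteq> PiE ?I (\<lambda>_. K)"
  proof (rule image_subsetI)
    fix M assume "M \<in> ?T"
    then show "?f M \<in> PiE ?I (\<lambda>_. K)"
      unfolding restrict_PiE_iff by auto
  qed
  have finite: "finite (PiE ?I (\<lambda>_. K))"
    using assms by (simp add: finite_PiE)
  have "card (PiE ?I (\<lambda>_. K)) = card K ^ (n * m)"
    by (simp add: card_PiE card_cartesian_product)
  moreover have "card ?T \<le> card (PiE ?I (\<lambda>_. K))"
    using card_inj_on_le[OF inj image finite] .
  moreover have "finite ?T"
    using finite_imageD[OF finite_subset[OF image finite] inj] .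
  ultimately show ?thesis
    by simp
qed

lemma coset_eq_if_diff_mem:
  assumes W: "mat_subgroup d W" and a: "a \<in> carrier_mat d d" "a' \<in> carrier_mat d d"
    and diff: "a - a' \<in> W"
  shows "(+) a ` W = (+) a' ` W"
proof -
  have subset: "(+) b ` W \<subseteq> (+) b' ` W"
    if b: "b \<in> carrier_mat d d" "b' \<in> carrier_mat d d" "b - b' \<in> W" for b b'
  proof
    fix x assume "x \<in> (+) b ` W"
    then obtain w where w: "w \<in> W" "x = b + w"
      by blast
    have "x = b' + ((b - b') + w)"
      using w b mat_subgroup_carrier[OF W w(1)] by (intro eq_matI) auto
    then show "x \<in> (+) b' ` W"
      using mat_subgroup_add[OF W b(3) w(1)] by blast
  qed
  have "a' - a = - (a - a')"
    using a by (intro eq_matI) auto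
  then have "a' - a \<in> W"
    using mat_subgroup_uminus[OF W diff] by simp
  then show ?thesis
    using subset[OF a diff] subset[OF a(2) a(1)] by blast
qed

lemma sl_diff_double_if_mod2_eq:
  assumes a: "a \<in> sl d" "a' \<in> sl d" and mod2: "map_mat (\<lambda>x. x mod 2) a = map_mat (\<lambda>x. x mod 2) a'"
  shows "\<exists>Y \<in> sl d. a - a' = 2 \<cdot>\<^sub>m Y"
proof
  have carrier: "a \<in> carrier_mat d d" "a' \<in> carrier_mat d d"
    using a by (auto simp: sl_def)
  define Y where "Y = mat d d (\<lambda>(k, l). (a $$ (k, l) - a' $$ (k, l)) div 2)"
  have even: "2 * Y $$ (k, l) = a $$ (k, l) - a' $$ (k, l)" if "k < d" "l < d" for k l
  proof -
    have "a $$ (k, l) mod 2 = a' $$ (k, l) mod 2"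
      using that carrier arg_cong[OF mod2, of "\<lambda>M. M $$ (k, l)"] by simp
    then show ?thesis
      using that by (auto simp: Y_def mod_eq_dvd_iff)
  qed
  have "2 * mtrace Y = (\<Sum>i<d. 2 * Y $$ (i, i))"
    by (simp add: mtrace_def Y_def sum_distrib_left)
  also have "\<dots> = (\<Sum>i<d. a $$ (i, i) - a' $$ (i, i))"
    using even by simp
  also have "\<dots> = mtrace a - mtrace a'"
    using carrier by (simp add: mtrace_def sum_subtractf)
  finally have "2 * mtrace Y = mtrace a - mtrace a'" .
  then show "Y \<in> sl d"
    using a by (simp add: sl_def Y_def mtrace_def)
  show "a - a' = 2 \<cdot>\<^sub>m Y"
    using carrier even by (intro eq_matI) (auto simp: Y_def)
qed

lemma finite_card_mod2_image:
  "finite (map_mat (\<lambda>x. x mod 2) ` sl d) \<and> card (map_mat (\<lambda>x::int. x mod 2) ` sl d) \<le> 2 ^ (d * d)"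
proof -
  let ?T = "{M \<in> carrier_mat d d. \<forall>i<d. \<forall>j<d. M $$ (i, j) \<in> {0, 1 :: int}}"
  have "x mod 2 \<in> {0, 1}" for x :: int
    using pos_mod_sign[of 2 x] pos_mod_bound[of 2 x] by auto
  then have image: "map_mat (\<lambda>x. x mod 2) ` sl d \<subseteq> ?T"
    by (auto simp: sl_def)
  have "finite ?T" "card ?T \<le> 2 ^ (d * d)"
    using card_mat_entries_le[of "{0, 1 :: int}" d d] by (simp_all add: numeral_2_eq_2)
  then show ?thesis
    using finite_subset[OF image] card_mono[OF _ image] by auto
qed

lemma sl_cosets_card_le_if_double_sl:
  assumes W: "sl_subgroup d W" and two: "\<forall>X\<in>sl d. 2 \<cdot>\<^sub>m X \<in> W"
  shows "finite (sl_cosets d W) \<and> card (sl_cosets d W) \<le> 2 ^ (d * d)"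
proof -
  let ?r = "map_mat (\<lambda>x. x mod 2) :: int mat \<Rightarrow> int mat"
  let ?coset = "\<lambda>a. (+) a ` W"
  let ?H = "(\<lambda>R. ?coset (inv_into (sl d) ?r R)) ` (?r ` sl d)"
  have same_coset: "?coset a = ?coset a'" if a: "a \<in> sl d" "a' \<in> sl d" "?r a = ?r a'" for a a'
  proof -
    obtain Y where "Y \<in> sl d" "a - a' = 2 \<cdot>\<^sub>m Y"
      using sl_diff_double_if_mod2_eq[OF a] by blast
    then have "a - a' \<in> W"
      using two by simp
    then show ?thesis
      using a coset_eq_if_diff_mem[OF sl_subgroup_imp_mat_subgroup[OF W]] by (auto simp: sl_def)
  qed
  have "sl_cosets d W \<subseteq> ?H"
  proof
    fix C assume "C \<in> sl_cosets d W"
    then obtain a where a: "a \<in> sl d" "C = ?coset a"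
      by (auto simp: sl_cosets_def)
    have rep: "inv_into (sl d) ?r (?r a) \<in> sl d"
      using a(1) by (simp add: inv_into_into)
    have "?r (inv_into (sl d) ?r (?r a)) = ?r a"
      using a(1) by (simp add: f_inv_into_f)
    from same_coset[OF rep a(1) this] have "C = ?coset (inv_into (sl d) ?r (?r a))"
      using a(2) by simp
    then show "C \<in> ?H"
      using a(1) by blast
  qed
  moreover have "finite ?H" "card ?H \<le> 2 ^ (d * d)"
    using finite_card_mod2_image[of d] card_image_le[of "?r ` sl d"] by (auto intro: le_trans)
  ultimately show ?thesis
    using finite_subset card_mono[of ?H "sl_cosets d W"] by fastforce
qed

lemma coset_fleeing_if_differences_span:
  assumes span: "differences_span_double_sl d S"
  shows "coset_fleeing d (2 ^ (d * d)) S"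
  unfolding coset_fleeing_def
proof (intro allI impI notI)
  fix W assume W: "sl_subgroup d W \<and> index_gt d W (2 ^ (d * d))"
    and "\<exists>C\<in>sl_cosets d W. S \<subseteq> C"
  then obtain a where a: "a \<in> sl d" and S: "S \<subseteq> (+) a ` W"
    by (auto simp: sl_cosets_def)
  have W_group: "mat_subgroup d W"
    using W sl_subgroup_imp_mat_subgroup by blast
  have "s - s' \<in> W" if ss: "s \<in> S" "s' \<in> S" for s s'
  proof -
    obtain w w' where w: "w \<in> W" "s = a + w" "w' \<in> W" "s' = a + w'"
      using S ss by blast
    have "s - s' = w - w'"
      using w a mat_subgroup_carrier[OF W_group w(1)] mat_subgroup_carrier[OF W_group w(3)]
      by (intro eq_matI) (auto simp: sl_def)
    then show ?thesis
      using mat_subgroup_diff[OF W_group w(1,3)] by simp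
  qed
  then have "\<forall>X\<in>sl d. 2 \<cdot>\<^sub>m X \<in> W"
    using span W_group unfolding differences_span_double_sl_def by blast
  from sl_cosets_card_le_if_double_sl[OF conjunct1[OF W] this] show False
    using conjunct2[OF W] unfolding index_gt_def by blast
qed

section \<open>Hyperplane fleeing\<close>

definition translation_space :: "nat \<Rightarrow> real mat set \<Rightarrow> real mat set" where
  "translation_space d A = {Y \<in> carrier_mat d d. \<forall>x\<in>A. x + Y \<in> A}"

context
  fixes d :: nat and A :: "real mat set"
  assumes A: "affine_sub d A"
begin

lemma affine_sub_carrier: "x \<in> A \<Longrightarrow> x \<in> carrier_mat d d"
  using A by (auto simp: affine_sub_def sl_real_def)

lemma affine_sub_line: "x \<in> A \<Longrightarrow> y \<in> A \<Longrightarrow> (1 - t) \<cdot>\<^sub>m x + t \<cdot>\<^sub>m y \<in> A"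
  using A by (simp add: affine_sub_def)

lemma affine_sub_add_diff:
  assumes xyz: "x \<in> A" "y \<in> A" "z \<in> A"
  shows "x + y - z \<in> A"
proof -
  let ?m = "(1 - 1 / 2) \<cdot>\<^sub>m x + (1 / 2) \<cdot>\<^sub>m y"
  have "(1 - 2) \<cdot>\<^sub>m z + 2 \<cdot>\<^sub>m ?m \<in> A"
    using affine_sub_line[OF xyz(3) affine_sub_line[OF xyz(1,2)]] .
  moreover have "(1 - 2) \<cdot>\<^sub>m z + 2 \<cdot>\<^sub>m ?m = x + y - z"
    using affine_sub_carrier[OF xyz(1)] affine_sub_carrier[OF xyz(2)] affine_sub_carrier[OF xyz(3)]
    by (intro eq_matI) auto
  ultimately show ?thesis
    by simp
qed

lemma translation_space_smult:
  assumes Y: "Y \<in> translation_space d A"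
  shows "r \<cdot>\<^sub>m Y \<in> translation_space d A"
proof -
  have "x + r \<cdot>\<^sub>m Y \<in> A" if x: "x \<in> A" for x
  proof -
    have "(1 - r) \<cdot>\<^sub>m x + r \<cdot>\<^sub>m (x + Y) = x + r \<cdot>\<^sub>m Y"
      using affine_sub_carrier[OF x] Y by (intro eq_matI) (auto simp: translation_space_def algebra_simps)
    moreover have "x + Y \<in> A"
      using x Y by (simp add: translation_space_def)
    ultimately show ?thesis
      using affine_sub_line[OF x] by metis
  qed
  then show ?thesis
    using Y by (simp add: translation_space_def)
qed

lemma mat_subgroup_translation_space: "mat_subgroup d (translation_space d A)"
proof -
  have "0\<^sub>m d d \<in> translation_space d A"
    using affine_sub_carrier by (simp add: translation_space_def)
  moreover have "Y + Z \<in> translation_space d A"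
    if "Y \<in> translation_space d A" "Z \<in> translation_space d A" for Y Z
  proof -
    have "x + (Y + Z) = (x + Y) + Z" if "x \<in> A" for x
      using affine_sub_carrier[OF that] that(1) \<open>Y \<in> translation_space d A\<close> \<open>Z \<in> translation_space d A\<close>
      by (auto simp: translation_space_def assoc_add_mat)
    then show ?thesis
      using that by (auto simp: translation_space_def)
  qed
  moreover have "- Y = (- 1) \<cdot>\<^sub>m Y" for Y :: "real mat"
    by (intro eq_matI) auto
  ultimately show ?thesis
    using translation_space_smult by (auto simp: mat_subgroup_def translation_space_def)
qed

lemma diff_mem_translation_space:
  assumes "x \<in> A" "y \<in> A"
  shows "x - y \<in> translation_space d A"
proof -
  have "z + (x - y) = z + x - y" if "z \<in> A" for z
    using affine_sub_carrier[OF that] affine_sub_carrier[OF assms(1)] affine_sub_carrier[OF assms(2)]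
    by (intro eq_matI) auto
  moreover have "x - y \<in> carrier_mat d d"
    using affine_sub_carrier[OF assms(2)] by (rule minus_carrier_mat)
  ultimately show ?thesis
    using assms affine_sub_add_diff by (auto simp: translation_space_def)
qed


lemma affine_sub_eq_sl_real:
  assumes x0: "x0 \<in> A" and V: "sl_real d \<subseteq> translation_space d A"
  shows "A = sl_real d"
proof
  show "A \<subseteq> sl_real d"
    using A unfolding affine_sub_def by blast
  show "sl_real d \<subseteq> A"
  proof
    fix y assume y: "y \<in> sl_real d"
    have x0_sl: "x0 \<in> sl_real d"
      using x0 \<open>A \<subseteq> sl_real d\<close> by blast
    then have "y - x0 \<in> sl_real d"
      using y by (auto simp: sl_real_def mtrace_minus)
    then have "x0 + (y - x0) \<in> A"
      using x0 V by (auto simp: translation_space_def)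
    moreover have "x0 + (y - x0) = y"
      using y x0_sl by (intro eq_matI) (auto simp: sl_real_def)
    ultimately show "y \<in> A"
      by simp
  qed
qed
end

lemma mat_subgroup_of_int_preimage:
  assumes V: "mat_subgroup d V"
  shows "mat_subgroup d {X \<in> carrier_mat d d. map_mat real_of_int X \<in> V}"
proof -
  have "map_mat real_of_int (x + y) = map_mat real_of_int x + map_mat real_of_int y"
    if "x \<in> carrier_mat d d" "y \<in> carrier_mat d d" for x y
    using that by (intro eq_matI) auto
  moreover have "map_mat real_of_int (- x) = - map_mat real_of_int x" for x
    by (intro eq_matI) auto
  moreover have "map_mat real_of_int (0\<^sub>m d d) = 0\<^sub>m d d"
    by (intro eq_matI) auto
  ultimately show ?thesis
    using mat_subgroup_zero[OF V] mat_subgroup_add[OF V] mat_subgroup_uminus[OF V]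
    by (auto simp: mat_subgroup_def)
qed

lemma sl_real_subset_if_double_sl:
  fixes V :: "real mat set"
  assumes V: "mat_subgroup d V" and smult: "\<And>r Y. Y \<in> V \<Longrightarrow> r \<cdot>\<^sub>m Y \<in> V"
    and double: "\<And>X. X \<in> sl d \<Longrightarrow> map_mat real_of_int (2 \<cdot>\<^sub>m X) \<in> V"
  shows "sl_real d \<subseteq> V"
proof
  have coords: "r \<cdot>\<^sub>m sl_basis d k l \<in> V"
    if kl: "k < d" "l < d" "(k, l) \<noteq> (d - 1, d - 1)" for k l r
  proof -
    have "sl_basis d k l \<in> sl d"
      using mtrace_sl_basis[OF kl] by (simp add: sl_def)
    then have "(r / 2) \<cdot>\<^sub>m map_mat real_of_int (2 \<cdot>\<^sub>m sl_basis d k l) \<in> V"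
      by (intro smult double)
    moreover have "(r / 2) \<cdot>\<^sub>m map_mat real_of_int (2 \<cdot>\<^sub>m sl_basis d k l) = r \<cdot>\<^sub>m sl_basis d k l"
      by (intro eq_matI) auto
    ultimately show ?thesis
      by simp
  qed
  fix Y assume Y: "Y \<in> sl_real d"
  show "Y \<in> V"
  proof (rule mat_subgroup_mem_of_sl_coordinates[OF V])
    show "Y \<in> carrier_mat d d" "mtrace Y = 0"
      using Y by (auto simp: sl_real_def)
  qed (rule coords)
qed

lemma hyperplane_fleeing_if_differences_span:
  assumes span: "differences_span_double_sl d S" and s0: "s0 \<in> S"
  shows "hyperplane_fleeing d (map_mat real_of_int ` S)"
  unfolding hyperplane_fleeing_def
proof (intro allI impI notI)
  fix A assume A: "affine_sub d A \<and> A \<noteq> sl_real d" and SA: "map_mat real_of_int ` S \<subseteq> A"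
  then have aff: "affine_sub d A"
    by blast
  let ?V = "translation_space d A"
  let ?WI = "{X \<in> carrier_mat d d. map_mat real_of_int X \<in> ?V}"
  have V: "mat_subgroup d ?V"
    by (rule mat_subgroup_translation_space[OF aff])
  have diffs: "\<forall>s\<in>S. \<forall>s'\<in>S. s - s' \<in> ?WI"
  proof (intro ballI)
    fix s s' assume ss: "s \<in> S" "s' \<in> S"
    have real_in_A: "map_mat real_of_int s \<in> A" "map_mat real_of_int s' \<in> A"
      using ss SA by blast+
    have carrier: "s \<in> carrier_mat d d" "s' \<in> carrier_mat d d"
      using affine_sub_carrier[OF aff real_in_A(1)] affine_sub_carrier[OF aff real_in_A(2)]
      by simp_all
    have "map_mat real_of_int (s - s') = map_mat real_of_int s - map_mat real_of_int s'"
      using carrier by (intro eq_matI) auto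
    then have "map_mat real_of_int (s - s') \<in> ?V"
      using diff_mem_translation_space[OF aff real_in_A] by simp
    then show "s - s' \<in> ?WI"
      using minus_carrier_mat[OF carrier(2)] by blast
  qed
  have "\<forall>X\<in>sl d. 2 \<cdot>\<^sub>m X \<in> ?WI"
    using span mat_subgroup_of_int_preimage[OF V] diffs unfolding differences_span_double_sl_def
    by blast
  then have "sl_real d \<subseteq> ?V"
    by (intro sl_real_subset_if_double_sl[OF V translation_space_smult[OF aff]]) auto
  then have "A = sl_real d"
    using affine_sub_eq_sl_real[OF aff] s0 SA by blast
  then show False
    using A by simp
qed

theorem proposition6p1:
  fixes d :: nat and es :: "(nat \<times> nat) list"
  assumes "d \<ge> 2"
    and "distinct es"
    and "set es = {(i, j). i < d \<and> j < d \<and> i \<noteq> j}"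
  shows "\<exists>Q N :: nat. N \<ge> 1 \<and>
    (\<forall>p :: int poly. lead_coeff p = 1 \<and> degree p = d \<and> companion d p \<in> sl d \<longrightarrow>
       coset_fleeing d Q (orbit d es N (companion d p)) \<and>
       hyperplane_fleeing d (map_mat real_of_int ` orbit d es N (companion d p)))"
proof -
  have "(0, 1) \<in> set es"
    using assms(1,3) by auto
  then have "es \<noteq> []"
    by auto
  then interpret offdiag_enumeration d es
    by unfold_locales (simp_all add: assms(3))
  show ?thesis
  proof (intro exI conjI allI impI)
    show "1 \<le> 4 * length es"
      using es_nonempty by (simp add: Suc_le_eq)
    fix p :: "int poly"
    let ?S = "orbit d es (4 * length es) (companion d p)"
    have span: "differences_span_double_sl d ?S"
      by (rule companion_orbit_differences_span[OF assms(1,3)])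
    show "coset_fleeing d (2 ^ (d * d)) ?S"
      by (rule coset_fleeing_if_differences_span[OF span])
    show "hyperplane_fleeing d (map_mat real_of_int ` ?S)"
      by (rule hyperplane_fleeing_if_differences_span[OF span self_mem_orbit[OF companion_carrier]])
  qed
qed

end
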